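(* Let $p,d\in\mathbb{N}$ and let $G$ be a finite graph such that $\mathrm{Sep}(G,p)\le d$ and $K_{p,p}$ is not a minor of $G$. Then for every $k\ge p$, $$\mathrm{Sep}(G,k)\le d+k^2+k\,2^k\max\{p,d\}.$$
   Context: Graphs are finite, simple, undirected. $\mathrm{Sep}(G,k)$ is the maximum, over all vertex sets $S$ with $|S|\le k$, of the number of connected components of $G-S$. *)

theory Defs
  imports Main
begin

definition simple_graph :: "'a set \<Rightarrow> 'a set set \<Rightarrow> bool" where
  "simple_graph V E \<longleftrightarrow> finite V \<and> (\<forall>e\<in>E. \<exists>u v. e = {u, v} \<and> u \<noteq> v \<and> u \<in> V \<and> v \<in> V)"

definition adj_in :: "'a set set \<Rightarrow> 'a set \<Rightarrow> ('a \<times> 'a) set" where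
  "adj_in E X = {(u, v). u \<in> X \<and> v \<in> X \<and> {u, v} \<in> E}"

definition components :: "'a set set \<Rightarrow> 'a set \<Rightarrow> 'a set set" where
  "components E X = {{v \<in> X. (u, v) \<in> (adj_in E X)\<^sup>*} | u. u \<in> X}"

definition Sep :: "'a set \<Rightarrow> 'a set set \<Rightarrow> nat \<Rightarrow> nat" where
  "Sep V E k = Max {card (components E (V - S)) | S. S \<subseteq> V \<and> card S \<le> k}"

definition connected_set :: "'a set set \<Rightarrow> 'a set \<Rightarrow> bool" where
  "connected_set E X \<longleftrightarrow> X \<noteq> {} \<and> (\<forall>u\<in>X. \<forall>v\<in>X. (u, v) \<in> (adj_in E X)\<^sup>*)"

definition is_minor :: "'b set \<Rightarrow> 'b set set \<Rightarrow> 'a set \<Rightarrow> 'a set set \<Rightarrow> bool" where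
  "is_minor VH EH V E \<longleftrightarrow>
     (\<exists>\<phi> :: 'b \<Rightarrow> 'a set.
        (\<forall>x\<in>VH. \<phi> x \<subseteq> V \<and> connected_set E (\<phi> x)) \<and>
        (\<forall>x\<in>VH. \<forall>y\<in>VH. x \<noteq> y \<longrightarrow> \<phi> x \<inter> \<phi> y = {}) \<and>
        (\<forall>x y. {x, y} \<in> EH \<longrightarrow> (\<exists>u\<in>\<phi> x. \<exists>v\<in>\<phi> y. {u, v} \<in> E)))"

definition Kpp_V :: "nat \<Rightarrow> (nat + nat) set" where
  "Kpp_V p = Inl ` {..<p} \<union> Inr ` {..<p}"

definition Kpp_E :: "nat \<Rightarrow> (nat + nat) set set" where
  "Kpp_E p = {{Inl i, Inr j} | i j. i < p \<and> j < p}"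

end

theory Submission
  imports Defs
begin

text \<open>Classify the components C of G - S by their neighbourhood T = N(C) \<subseteq> S.
  If |T| \<le> p, every component with neighbourhood T is still a component of G - T,
  so there are at most Sep(G,p) \<le> d of them. If |T| \<ge> p, there are fewer than p of them:
  p such components, contracted, together with p vertices of T would form a K_{p,p} minor.
  Hence G - S has at most 2^|S| max{p,d} components, which is stronger than the claim
  (p \<ge> 1, because K_{0,0} is a minor of every graph).\<close>

lemma adj_in_rtrancl_sym: "(u, v) \<in> (adj_in E X)\<^sup>* \<Longrightarrow> (v, u) \<in> (adj_in E X)\<^sup>*"
proof -
  have "(adj_in E X)\<inverse> = adj_in E X"
    by (auto simp: adj_in_def insert_commute)
  then show "(u, v) \<in> (adj_in E X)\<^sup>* \<Longrightarrow> (v, u) \<in> (adj_in E X)\<^sup>*"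
    by (metis rtrancl_converseI)
qed

lemma component_eq_reachable:
  assumes "C \<in> components E X" "w \<in> C"
  shows "C = {v \<in> X. (w, v) \<in> (adj_in E X)\<^sup>*}"
proof -
  from assms obtain u where u: "u \<in> X" "C = {v \<in> X. (u, v) \<in> (adj_in E X)\<^sup>*}"
    by (auto simp: components_def)
  with assms have "(u, w) \<in> (adj_in E X)\<^sup>*" by auto
  with u show ?thesis
    by (auto intro: rtrancl_trans adj_in_rtrancl_sym)
qed

lemma components_disjoint: "pairwise disjnt (components E X)"
proof (rule pairwiseI)
  fix C1 C2 assume C: "C1 \<in> components E X" "C2 \<in> components E X" "C1 \<noteq> C2"
  show "disjnt C1 C2"
  proof (rule ccontr)
    assume "\<not> disjnt C1 C2"
    then obtain w where "w \<in> C1" "w \<in> C2" by (auto simp: disjnt_def)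
    with component_eq_reachable[OF C(1)] component_eq_reachable[OF C(2)] C(3)
    show False by auto
  qed
qed

lemma component_subset: "C \<in> components E X \<Longrightarrow> C \<subseteq> X"
  by (auto simp: components_def)

lemma finite_components: "finite X \<Longrightarrow> finite (components E X)"
  by (rule finite_subset[of _ "Pow X"]) (auto simp: components_def)

lemma connected_set_component:
  assumes "C \<in> components E X"
  shows "connected_set E C"
proof -
  from assms obtain u where u: "u \<in> X" "C = {v \<in> X. (u, v) \<in> (adj_in E X)\<^sup>*}"
    by (auto simp: components_def)
  have walk_in_C: "(u, w) \<in> (adj_in E C)\<^sup>*" if "(u, w) \<in> (adj_in E X)\<^sup>*" for w
    using that
  proof (induction rule: rtrancl_induct)
    case base
    show ?case by simp
  next
    case (step y z)
    then have "(y, z) \<in> adj_in E C"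
      using u by (auto simp: adj_in_def intro: rtrancl_into_rtrancl)
    with step.IH show ?case by (rule rtrancl_into_rtrancl)
  qed
  have "(v, w) \<in> (adj_in E C)\<^sup>*" if "v \<in> C" "w \<in> C" for v w
  proof -
    have "(u, v) \<in> (adj_in E C)\<^sup>*" "(u, w) \<in> (adj_in E C)\<^sup>*"
      using walk_in_C that u by auto
    then show ?thesis by (meson adj_in_rtrancl_sym rtrancl_trans)
  qed
  moreover have "u \<in> C" using u by auto
  ultimately show ?thesis by (auto simp: connected_set_def)
qed

definition neighbours :: "'a set set \<Rightarrow> 'a set \<Rightarrow> 'a set \<Rightarrow> 'a set" where
  "neighbours E S C = {s \<in> S. \<exists>c\<in>C. {s, c} \<in> E}"

lemma component_of_smaller_separator:
  assumes C: "C \<in> components E (V - S)" and "T \<subseteq> S" and "neighbours E S C \<subseteq> T"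
  shows "C \<in> components E (V - T)"
proof -
  from C obtain u where u: "u \<in> V - S" "C = {v \<in> V - S. (u, v) \<in> (adj_in E (V - S))\<^sup>*}"
    by (auto simp: components_def)
  have "adj_in E (V - S) \<subseteq> adj_in E (V - T)"
    using \<open>T \<subseteq> S\<close> by (auto simp: adj_in_def)
  then have "(adj_in E (V - S))\<^sup>* \<subseteq> (adj_in E (V - T))\<^sup>*"
    by (rule rtrancl_mono)
  then have "C \<subseteq> {v \<in> V - T. (u, v) \<in> (adj_in E (V - T))\<^sup>*}"
    using u \<open>T \<subseteq> S\<close> by blast
  moreover have "z \<in> C" if "(u, z) \<in> (adj_in E (V - T))\<^sup>*" for z
    using that
  proof (induction rule: rtrancl_induct)
    case base
    show ?case using u by simp
  next
    case (step y z)
    then have z: "z \<in> V - T" "{y, z} \<in> E" by (auto simp: adj_in_def)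
    have "z \<notin> S"
    proof
      assume "z \<in> S"
      with z step.IH have "z \<in> neighbours E S C"
        by (auto simp: neighbours_def insert_commute)
      with z \<open>neighbours E S C \<subseteq> T\<close> show False by auto
    qed
    with z step.IH u show ?case
      by (auto simp: adj_in_def intro: rtrancl_into_rtrancl)
  qed
  ultimately have "C = {v \<in> V - T. (u, v) \<in> (adj_in E (V - T))\<^sup>*}" by blast
  moreover have "u \<in> V - T" using u \<open>T \<subseteq> S\<close> by auto
  ultimately show ?thesis by (auto simp: components_def)
qed

lemma finite_Sep_candidates:
  assumes "finite V"
  shows "finite {card (components E (V - S)) | S. S \<subseteq> V \<and> card S \<le> k}"
proof -
  have "finite {S. S \<subseteq> V \<and> card S \<le> k}"
    using assms by (rule rev_finite_subset[OF finite_Pow_iff[THEN iffD2]]) blast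
  then show ?thesis by (rule finite_image_set)
qed

lemma card_components_le_Sep:
  assumes "finite V" "T \<subseteq> V" "card T \<le> k"
  shows "card (components E (V - T)) \<le> Sep V E k"
  unfolding Sep_def
proof (rule Max_ge)
  show "finite {card (components E (V - S)) | S. S \<subseteq> V \<and> card S \<le> k}"
    using \<open>finite V\<close> by (rule finite_Sep_candidates)
  show "card (components E (V - T)) \<in> {card (components E (V - S)) | S. S \<subseteq> V \<and> card S \<le> k}"
    using assms(2,3) by blast
qed

lemma Sep_le:
  assumes "finite V"
    and bound: "\<And>S. S \<subseteq> V \<Longrightarrow> card S \<le> k \<Longrightarrow> card (components E (V - S)) \<le> b"
  shows "Sep V E k \<le> b"
  unfolding Sep_def
proof (rule Max.boundedI)
  show "finite {card (components E (V - S)) | S. S \<subseteq> V \<and> card S \<le> k}"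
    using \<open>finite V\<close> by (rule finite_Sep_candidates)
  have "card (components E (V - {})) \<in> {card (components E (V - S)) | S. S \<subseteq> V \<and> card S \<le> k}"
    by force
  then show "{card (components E (V - S)) | S. S \<subseteq> V \<and> card S \<le> k} \<noteq> {}"
    by blast
  show "a \<le> b" if "a \<in> {card (components E (V - S)) | S. S \<subseteq> V \<and> card S \<le> k}" for a
    using that bound by blast
qed

lemma is_minor_Kpp_0: "is_minor (Kpp_V 0) (Kpp_E 0) V E"
  by (simp add: is_minor_def Kpp_V_def Kpp_E_def)

lemma is_minor_KppI:
  assumes "finite A" "card A = p" "A \<subseteq> V"
    and "finite F" "card F = p" "pairwise disjnt F"
    and F_sub: "\<And>X. X \<in> F \<Longrightarrow> X \<subseteq> V - A"
    and F_conn: "\<And>X. X \<in> F \<Longrightarrow> connected_set E X"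
    and F_adj: "\<And>a X. a \<in> A \<Longrightarrow> X \<in> F \<Longrightarrow> \<exists>x\<in>X. {a, x} \<in> E"
  shows "is_minor (Kpp_V p) (Kpp_E p) V E"
proof -
  obtain f where f: "bij_betw f {..<p} A"
    using assms finite_same_card_bij[of "{..<p}" A] by auto
  obtain g where g: "bij_betw g {..<p} F"
    using assms finite_same_card_bij[of "{..<p}" F] by auto
  define \<phi> where "\<phi> = case_sum (\<lambda>i. {f i}) g"
  have fA: "f i \<in> A" and gF: "g i \<in> F" if "i < p" for i
    using f g that by (auto simp: bij_betw_def)
  have Kpp_V_cases: "(\<exists>i<p. x = Inl i) \<or> (\<exists>i<p. x = Inr i)" if "x \<in> Kpp_V p" for x
    using that by (auto simp: Kpp_V_def)
  have "\<phi> x \<subseteq> V \<and> connected_set E (\<phi> x)" if "x \<in> Kpp_V p" for x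
    using Kpp_V_cases[OF that]
  proof (elim disjE exE conjE)
    fix i assume "i < p" "x = Inl i"
    then show ?thesis
      using fA \<open>A \<subseteq> V\<close> by (auto simp: \<phi>_def connected_set_def adj_in_def)
  next
    fix i assume "i < p" "x = Inr i"
    then show ?thesis
      using gF F_sub F_conn by (auto simp: \<phi>_def)
  qed
  moreover have "\<phi> x \<inter> \<phi> y = {}" if "x \<in> Kpp_V p" "y \<in> Kpp_V p" "x \<noteq> y" for x y
  proof -
    have f_eq_iff: "f i = f j \<longleftrightarrow> i = j" if "i < p" "j < p" for i j
      using f that by (auto simp: bij_betw_def inj_on_def)
    have g_disjoint: "g i \<inter> g j = {}" if "i < p" "j < p" "i \<noteq> j" for i j
    proof -
      have "g i \<noteq> g j" using g that by (auto simp: bij_betw_def inj_on_def)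
      then show ?thesis
        using gF that \<open>pairwise disjnt F\<close> by (metis disjnt_def pairwiseD)
    qed
    have f_notin_g: "f i \<notin> g j" if "i < p" "j < p" for i j
      using fA gF F_sub that by blast
    show ?thesis
      using Kpp_V_cases[OF \<open>x \<in> Kpp_V p\<close>] Kpp_V_cases[OF \<open>y \<in> Kpp_V p\<close>] \<open>x \<noteq> y\<close>
      by (elim disjE exE conjE) (auto simp: \<phi>_def f_eq_iff f_notin_g g_disjoint)
  qed
  moreover have "\<exists>u\<in>\<phi> x. \<exists>v\<in>\<phi> y. {u, v} \<in> E" if "{x, y} \<in> Kpp_E p" for x y
  proof -
    from that obtain i j where ij: "i < p" "j < p" "{x, y} = {Inl i, Inr j}"
      by (auto simp: Kpp_E_def)
    obtain c where "c \<in> g j" "{f i, c} \<in> E"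
      using F_adj fA gF ij by blast
    with ij show ?thesis
      by (auto simp: \<phi>_def doubleton_eq_iff insert_commute)
  qed
  ultimately show ?thesis
    unfolding is_minor_def by blast
qed

lemma card_components_with_large_neighbourhood:
  assumes no_minor: "\<not> is_minor (Kpp_V p) (Kpp_E p) V E"
    and "finite V" "S \<subseteq> V" "T \<subseteq> S" "p \<le> card T"
  shows "card {C \<in> components E (V - S). neighbours E S C = T} < p"
proof (rule ccontr)
  assume "\<not> ?thesis"
  then have "p \<le> card {C \<in> components E (V - S). neighbours E S C = T}" by simp
  then obtain F where F: "F \<subseteq> {C \<in> components E (V - S). neighbours E S C = T}" "card F = p"
    by (rule obtain_subset_with_card_n)
  obtain A where A: "A \<subseteq> T" "card A = p"
    using \<open>p \<le> card T\<close> by (rule obtain_subset_with_card_n)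
  have F_comp: "F \<subseteq> components E (V - S)" using F(1) by blast
  have "finite T"
    using \<open>finite V\<close> \<open>T \<subseteq> S\<close> \<open>S \<subseteq> V\<close> by (meson finite_subset)
  have "is_minor (Kpp_V p) (Kpp_E p) V E"
  proof (rule is_minor_KppI)
    show "finite A" using A(1) \<open>finite T\<close> by (rule finite_subset)
    show "card A = p" by (rule A(2))
    show "card F = p" by (rule F(2))
    show "A \<subseteq> V" using A(1) \<open>T \<subseteq> S\<close> \<open>S \<subseteq> V\<close> by blast
    show "finite F"
      using F_comp \<open>finite V\<close> by (meson finite_Diff finite_components finite_subset)
    show "pairwise disjnt F"
      by (rule pairwise_subset[OF components_disjoint F_comp])
    show "X \<subseteq> V - A" if "X \<in> F" for X
      using component_subset F_comp that A(1) \<open>T \<subseteq> S\<close> by blast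
    show "connected_set E X" if "X \<in> F" for X
      using connected_set_component F_comp that by blast
    show "\<exists>x\<in>X. {a, x} \<in> E" if "a \<in> A" "X \<in> F" for a X
      using that F(1) A(1) by (auto simp: neighbours_def)
  qed
  with no_minor show False by contradiction
qed

lemma card_components_with_small_neighbourhood:
  assumes "finite V" "S \<subseteq> V" "T \<subseteq> S" "card T \<le> k"
  shows "card {C \<in> components E (V - S). neighbours E S C = T} \<le> Sep V E k"
proof -
  have "{C \<in> components E (V - S). neighbours E S C = T} \<subseteq> components E (V - T)"
    using component_of_smaller_separator[OF _ \<open>T \<subseteq> S\<close>] by auto
  then have "card {C \<in> components E (V - S). neighbours E S C = T} \<le> card (components E (V - T))"
    using \<open>finite V\<close> by (intro card_mono finite_components) auto
  also have "\<dots> \<le> Sep V E k"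
    using assms by (intro card_components_le_Sep) auto
  finally show ?thesis .
qed

lemma card_components_le:
  assumes "finite V" "Sep V E p \<le> d" "\<not> is_minor (Kpp_V p) (Kpp_E p) V E" "S \<subseteq> V"
  shows "card (components E (V - S)) \<le> 2 ^ card S * max p d"
proof -
  let ?class = "\<lambda>T. {C \<in> components E (V - S). neighbours E S C = T}"
  have "finite S" using assms finite_subset by blast
  have "components E (V - S) = (\<Union>T\<in>Pow S. ?class T)"
    by (auto simp: neighbours_def)
  then have "card (components E (V - S)) = card (\<Union>T\<in>Pow S. ?class T)"
    by (rule arg_cong)
  also have "\<dots> \<le> (\<Sum>T\<in>Pow S. card (?class T))"
    using \<open>finite S\<close> by (intro card_UN_le) simp
  also have "\<dots> \<le> (\<Sum>T\<in>Pow S. max p d)"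
  proof (rule sum_mono)
    fix T assume "T \<in> Pow S"
    show "card (?class T) \<le> max p d"
    proof (cases "card T \<le> p")
      case True
      then have "card (?class T) \<le> Sep V E p"
        using assms(1,4) \<open>T \<in> Pow S\<close> by (intro card_components_with_small_neighbourhood) auto
      then show ?thesis using assms(2) by simp
    next
      case False
      then have "card (?class T) < p"
        using assms(1,3,4) \<open>T \<in> Pow S\<close> by (intro card_components_with_large_neighbourhood) auto
      then show ?thesis by simp
    qed
  qed
  also have "\<dots> = 2 ^ card S * max p d"
    using \<open>finite S\<close> by (simp add: card_Pow)
  finally show ?thesis .
qed

theorem proposition4p17:
  fixes V :: "'a set" and E :: "'a set set" and p d :: nat
  assumes "simple_graph V E"
    and "Sep V E p \<le> d"
    and "\<not> is_minor (Kpp_V p) (Kpp_E p) V E"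
  shows "\<forall>k \<ge> p. Sep V E k \<le> d + k^2 + k * 2^k * max p d"
proof (intro allI impI)
  fix k assume "p \<le> k"
  have "finite V" using assms(1) by (simp add: simple_graph_def)
  have "p \<noteq> 0" using assms(3) is_minor_Kpp_0 by metis
  have "Sep V E k \<le> 2 ^ k * max p d"
  proof (rule Sep_le[OF \<open>finite V\<close>])
    fix S assume "S \<subseteq> V" "card S \<le> k"
    then have "card (components E (V - S)) \<le> 2 ^ card S * max p d"
      using card_components_le \<open>finite V\<close> assms(2,3) by blast
    also have "\<dots> \<le> 2 ^ k * max p d"
      using \<open>card S \<le> k\<close> by simp
    finally show "card (components E (V - S)) \<le> 2 ^ k * max p d" .
  qed
  also have "\<dots> \<le> k * 2 ^ k * max p d"
    using \<open>p \<le> k\<close> \<open>p \<noteq> 0\<close> by simp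
  finally show "Sep V E k \<le> d + k^2 + k * 2^k * max p d"
    by (simp add: trans_le_add2)
qed

end
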